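(* Let $\Delta$ be a pure quasi-forest of dimension $d-1$ with $f$-vector $(f_0,f_1,\ldots,f_{d-1})$. Then $(f_0,\ldots,f_{d-1})$ is unimodal, i.e., there is $j$ with $f_0\le f_1\le\cdots\le f_j\ge f_{j+1}\ge\cdots\ge f_{d-1}$.
   Context: A simplicial complex $\Delta$ on $[n]$ is a collection of subsets of $[n]$ containing all singletons and closed under taking subsets; $\dim\Delta=d-1$ where $d$ is the maximal face size; facets are maximal faces; $\Delta$ is pure if all facets have the same cardinality; $f_i$ is the number of faces with $i+1$ elements. For facets $F_{i_1},\ldots,F_{i_q}$, $\langle F_{i_1},\ldots,F_{i_q}\rangle$ is the subcomplex of all faces contained in some $F_{i_j}$. A facet $F$ is a leaf if there is another facet $G\neq F$ with $H\cap F\subset G\cap F$ for all facets $H\neq F$. A quasi-forest is a simplicial complex whose facets admit an ordering $H_1,\ldots,H_m$ such that for each $1<j\le m$, $H_j$ is a leaf of $\langle H_1,\ldots,H_j\rangle$. *)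

theory Defs
  imports Main
begin

definition simplicial_complex :: "nat \<Rightarrow> nat set set \<Rightarrow> bool" where
  "simplicial_complex n \<Delta> \<longleftrightarrow>
     (\<forall>F\<in>\<Delta>. F \<subseteq> {1..n}) \<and>
     (\<forall>i\<in>{1..n}. {i} \<in> \<Delta>) \<and>
     (\<forall>F\<in>\<Delta>. \<forall>G. G \<subseteq> F \<longrightarrow> G \<in> \<Delta>)"

definition facets :: "nat set set \<Rightarrow> nat set set" where
  "facets \<Delta> = {F \<in> \<Delta>. \<forall>G\<in>\<Delta>. F \<subseteq> G \<longrightarrow> G = F}"

definition pure :: "nat set set \<Rightarrow> bool" where
  "pure \<Delta> \<longleftrightarrow> (\<forall>F\<in>facets \<Delta>. \<forall>G\<in>facets \<Delta>. card F = card G)"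

definition gen :: "nat set set \<Rightarrow> nat set set" where
  "gen FS = {S. \<exists>F\<in>FS. S \<subseteq> F}"

definition is_leaf :: "nat set set \<Rightarrow> nat set \<Rightarrow> bool" where
  "is_leaf \<Delta> F \<longleftrightarrow> F \<in> facets \<Delta> \<and>
     (\<exists>G\<in>facets \<Delta>. G \<noteq> F \<and> (\<forall>H\<in>facets \<Delta>. H \<noteq> F \<longrightarrow> H \<inter> F \<subseteq> G \<inter> F))"

definition quasi_forest :: "nat set set \<Rightarrow> bool" where
  "quasi_forest \<Delta> \<longleftrightarrow> (\<exists>Hs. distinct Hs \<and> set Hs = facets \<Delta> \<and>
     (\<forall>j. 1 \<le> j \<and> j < length Hs \<longrightarrow> is_leaf (gen (set (take (Suc j) Hs))) (Hs ! j)))"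

definition fvec :: "nat set set \<Rightarrow> nat \<Rightarrow> nat" where
  "fvec \<Delta> i = card {F \<in> \<Delta>. card F = i + 1}"

definition unimodal :: "(nat \<Rightarrow> nat) \<Rightarrow> nat \<Rightarrow> bool" where
  "unimodal f d \<longleftrightarrow> (\<exists>j. (\<forall>i. i + 1 \<le> j \<and> i + 1 < d \<longrightarrow> f i \<le> f (i + 1)) \<and>
                          (\<forall>i. j \<le> i \<and> i + 1 < d \<longrightarrow> f (i + 1) \<le> f i))"

end

theory Submission
  imports Defs Complex_Main
begin

text \<open>
  Build the complex by adding the facets in leaf order. A facet \<open>H\<close> with \<open>|H| = d\<close> attached
  as a leaf along the facet \<open>G\<close> meets the earlier complex exactly in the simplex \<open>H \<inter> G\<close>, so it
  contributes \<open>C(d,t) - C(k,t)\<close> new faces of size \<open>t \<ge> 1\<close>, where \<open>k = |H \<inter> G| \<le> d\<close>.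
  Each such sequence increases while \<open>2t < d\<close> and decreases once \<open>2t \<ge> d\<close>; this shape is
  preserved under sums, and \<open>f\<^sub>i\<close> is the sum of the contributions at \<open>t = i + 1\<close>.
\<close>

lemma binomial_le_binomial_Suc:
  assumes "2 * k < n"
  shows "n choose k \<le> n choose Suc k"
proof (cases "2 * Suc k \<le> n")
  case True
  then show ?thesis by (intro binomial_mono) auto
next
  case False
  with assms have "odd n" "k = n div 2" by presburger+
  then show ?thesis by (simp add: central_binomial_odd)
qed

lemma binomial_Suc_le_binomial:
  assumes "n \<le> 2 * k + 1"
  shows "n choose Suc k \<le> n choose k"
proof (cases "Suc k \<le> n")
  case True
  with assms show ?thesis by (intro binomial_antimono) auto
qed (simp add: binomial_eq_0)

text \<open>
  By Pascal's rule, \<open>C(s,t+1) - C(s,t)\<close> grows by \<open>C(s,t) - C(s,t-1)\<close> from \<open>s\<close> to \<open>s + 1\<close>,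
  which is nonnegative for \<open>s \<ge> 2t - 1\<close> and nonpositive for \<open>s < 2t\<close>.
\<close>
lemma binomial_Suc_diff_mono:
  assumes "k \<le> s" "2 * t \<le> Suc k"
  shows "int (k choose Suc t) - int (k choose t) \<le> int (s choose Suc t) - int (s choose t)"
  using assms(1)
proof (induction s rule: dec_induct)
  case (step m)
  show ?case
  proof (cases t)
    case (Suc u)
    have "m choose u \<le> m choose t"
      using binomial_le_binomial_Suc[of u m] assms(2) step.hyps Suc by simp
    with step.IH Suc show ?thesis by simp
  qed (use step.IH in simp)
qed simp

lemma binomial_Suc_diff_antimono:
  assumes "k \<le> s" "s \<le> 2 * t"
  shows "int (s choose Suc t) - int (s choose t) \<le> int (k choose Suc t) - int (k choose t)"
  using assms
proof (induction s rule: dec_induct)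
  case (step m)
  obtain u where t: "t = Suc u" using step.prems by (cases t) auto
  have "m choose t \<le> m choose u"
    using binomial_Suc_le_binomial[of m u] step.prems t by simp
  with step.IH step.prems t show ?case by simp
qed simp

text \<open>
  Only face sizes \<open>t \<ge> 1\<close> are constrained: the empty face belongs to every facet but is
  counted once.
\<close>
definition peaks_at_half :: "nat \<Rightarrow> (nat \<Rightarrow> nat) \<Rightarrow> bool" where
  "peaks_at_half d h \<longleftrightarrow>
     (\<forall>t\<ge>1. 2 * t < d \<longrightarrow> h t \<le> h (Suc t)) \<and> (\<forall>t\<ge>1. d \<le> 2 * t \<longrightarrow> h (Suc t) \<le> h t)"

lemma peaks_at_half_cong:
  "peaks_at_half d h \<Longrightarrow> (\<And>t. t \<ge> 1 \<Longrightarrow> g t = h t) \<Longrightarrow> peaks_at_half d g"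
  unfolding peaks_at_half_def by auto

lemma peaks_at_half_add:
  "peaks_at_half d g \<Longrightarrow> peaks_at_half d h \<Longrightarrow> peaks_at_half d (\<lambda>t. g t + h t)"
  unfolding peaks_at_half_def by (auto intro: add_mono)

lemma peaks_at_half_binomial_diff:
  assumes "k \<le> d"
  shows "peaks_at_half d (\<lambda>t. (d choose t) - (k choose t))"
proof -
  have below: "k choose t \<le> d choose t" for t
    using assms by (rule binomial_right_mono)
  have "(d choose t) - (k choose t) \<le> (d choose Suc t) - (k choose Suc t)" if "2 * t < d" for t
  proof -
    have "int (k choose Suc t) - int (k choose t) \<le> int (d choose Suc t) - int (d choose t)"
    proof (cases "2 * t \<le> Suc k")
      case True
      with assms show ?thesis by (rule binomial_Suc_diff_mono)
    next
      case False
      then have "k choose Suc t \<le> k choose t" by (intro binomial_Suc_le_binomial) simp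
      moreover have "d choose t \<le> d choose Suc t" using that by (rule binomial_le_binomial_Suc)
      ultimately show ?thesis by simp
    qed
    with below[of t] below[of "Suc t"] show ?thesis by linarith
  qed
  moreover have "(d choose Suc t) - (k choose Suc t) \<le> (d choose t) - (k choose t)" if "d \<le> 2 * t" for t
    using binomial_Suc_diff_antimono[OF assms that] below[of t] below[of "Suc t"] by linarith
  ultimately show ?thesis unfolding peaks_at_half_def by blast
qed

lemma unimodal_if_peaks_at_half:
  assumes "peaks_at_half d h"
  shows "unimodal (\<lambda>i. h (Suc i)) d"
  unfolding unimodal_def
proof (intro exI[of _ "(d - 1) div 2"] conjI allI impI)
  fix i assume "i + 1 \<le> (d - 1) div 2 \<and> i + 1 < d"
  then have "2 * Suc i < d" by presburger
  with assms show "h (Suc i) \<le> h (Suc (i + 1))" unfolding peaks_at_half_def by simp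
next
  fix i assume "(d - 1) div 2 \<le> i \<and> i + 1 < d"
  then have "d \<le> 2 * Suc i" by presburger
  with assms show "h (Suc (i + 1)) \<le> h (Suc i)" unfolding peaks_at_half_def by simp
qed

lemma gen_insert: "gen (insert H X) = Pow H \<union> gen X"
  unfolding gen_def by auto

lemma finite_gen:
  assumes "finite X" "\<forall>A\<in>X. finite A"
  shows "finite (gen X)"
proof (rule finite_subset)
  show "gen X \<subseteq> Pow (\<Union>X)" unfolding gen_def by auto
  show "finite (Pow (\<Union>X))" using assms by simp
qed

lemma facets_gen:
  assumes antichain: "\<And>A B. A \<in> X \<Longrightarrow> B \<in> X \<Longrightarrow> A \<subseteq> B \<Longrightarrow> A = B"
  shows "facets (gen X) = X"
proof
  show "facets (gen X) \<subseteq> X"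
  proof
    fix F assume F: "F \<in> facets (gen X)"
    then obtain A where "A \<in> X" "F \<subseteq> A" unfolding facets_def gen_def by auto
    moreover from this have "A \<in> gen X" unfolding gen_def by auto
    ultimately show "F \<in> X" using F unfolding facets_def by auto
  qed
  show "X \<subseteq> facets (gen X)"
  proof
    fix A assume "A \<in> X"
    have "G = A" if "G \<in> gen X" "A \<subseteq> G" for G
    proof -
      obtain B where "B \<in> X" "G \<subseteq> B" using \<open>G \<in> gen X\<close> unfolding gen_def by blast
      with \<open>A \<in> X\<close> \<open>A \<subseteq> G\<close> antichain[of A B] show "G = A" by auto
    qed
    with \<open>A \<in> X\<close> show "A \<in> facets (gen X)" unfolding facets_def gen_def by auto
  qed
qed

lemma leaf_meets_gen_in_facet:
  assumes antichain: "\<And>A B. A \<in> insert H X \<Longrightarrow> B \<in> insert H X \<Longrightarrow> A \<subseteq> B \<Longrightarrow> A = B"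
    and "H \<notin> X" and "is_leaf (gen (insert H X)) H"
  obtains G where "G \<in> X" "gen X \<inter> Pow H = Pow (H \<inter> G)"
proof -
  have "facets (gen (insert H X)) = insert H X"
    using antichain by (rule facets_gen)
  then obtain G where G: "G \<in> insert H X" "G \<noteq> H" "\<forall>H'\<in>insert H X. H' \<noteq> H \<longrightarrow> H' \<inter> H \<subseteq> G \<inter> H"
    using assms(3) unfolding is_leaf_def by auto
  have "gen X \<inter> Pow H \<subseteq> Pow (H \<inter> G)"
  proof
    fix S assume "S \<in> gen X \<inter> Pow H"
    then obtain H' where "H' \<in> X" "S \<subseteq> H'" "S \<subseteq> H" unfolding gen_def by blast
    moreover from \<open>H' \<in> X\<close> \<open>H \<notin> X\<close> have "H' \<inter> H \<subseteq> G \<inter> H" using G(3) by auto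
    ultimately show "S \<in> Pow (H \<inter> G)" by blast
  qed
  moreover have "Pow (H \<inter> G) \<subseteq> gen X"
    using G(1,2) unfolding gen_def by auto
  ultimately have "gen X \<inter> Pow H = Pow (H \<inter> G)" by blast
  moreover have "G \<in> X" using G(1,2) by simp
  ultimately show ?thesis using that by blast
qed

lemma card_subsets_not_subset:
  assumes "finite H" "K \<subseteq> H"
  shows "card {S. S \<subseteq> H \<and> card S = t \<and> \<not> S \<subseteq> K} = (card H choose t) - (card K choose t)"
proof -
  have "finite K" using assms finite_subset by auto
  have "{S. S \<subseteq> H \<and> card S = t \<and> \<not> S \<subseteq> K} = {S. S \<subseteq> H \<and> card S = t} - {S. S \<subseteq> K \<and> card S = t}"
    by auto
  moreover have "{S. S \<subseteq> K \<and> card S = t} \<subseteq> {S. S \<subseteq> H \<and> card S = t}"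
    using assms by auto
  ultimately show ?thesis
    using \<open>finite K\<close> by (simp add: card_Diff_subset n_subsets[OF assms(1)] n_subsets)
qed

lemma card_faces_gen_insert:
  assumes "finite X" "\<forall>A\<in>X. finite A" "finite H" "K \<subseteq> H"
    and meet: "gen X \<inter> Pow H - {{}} = Pow K - {{}}" and "t \<ge> 1"
  shows "card {S \<in> gen (insert H X). card S = t}
           = card {S \<in> gen X. card S = t} + ((card H choose t) - (card K choose t))"
proof -
  let ?new = "{S. S \<subseteq> H \<and> card S = t \<and> \<not> S \<subseteq> K}"
  have old_face_iff: "S \<in> gen X \<longleftrightarrow> S \<subseteq> K" if "S \<subseteq> H" "card S = t" for S
  proof -
    have "S \<noteq> {}" using that(2) \<open>t \<ge> 1\<close> by auto
    then show ?thesis using meet that(1) by (metis Diff_iff Int_iff PowD PowI singletonD)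
  qed
  have "{S \<in> gen (insert H X). card S = t} = {S \<in> gen X. card S = t} \<union> ?new"
    using old_face_iff unfolding gen_insert by auto
  moreover have "{S \<in> gen X. card S = t} \<inter> ?new = {}"
    using old_face_iff by auto
  moreover have "finite {S \<in> gen X. card S = t}"
    using finite_gen[OF assms(1,2)] by simp
  moreover have "finite ?new" using \<open>finite H\<close> by simp
  ultimately show ?thesis
    by (simp add: card_Un_disjoint card_subsets_not_subset[OF assms(3,4)])
qed

definition leaf_order :: "nat set list \<Rightarrow> bool" where
  "leaf_order Hs \<longleftrightarrow>
     (\<forall>j. 1 \<le> j \<and> j < length Hs \<longrightarrow> is_leaf (gen (set (take (Suc j) Hs))) (Hs ! j))"

lemma leaf_order_snoc:
  "leaf_order (Hs @ [H]) \<longleftrightarrow>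
     leaf_order Hs \<and> (Hs \<noteq> [] \<longrightarrow> is_leaf (gen (insert H (set Hs))) H)"
proof -
  have "is_leaf (gen (set (take (Suc j) (Hs @ [H])))) ((Hs @ [H]) ! j) \<longleftrightarrow>
      (if j < length Hs then is_leaf (gen (set (take (Suc j) Hs))) (Hs ! j)
       else is_leaf (gen (insert H (set Hs))) H)"
    if "j < length (Hs @ [H])" for j
    using that by (auto simp: nth_append less_Suc_eq)
  then show ?thesis
    unfolding leaf_order_def by (auto simp: less_Suc_eq Suc_le_eq)
qed

lemma gen_meets_last_facet:
  assumes "leaf_order (Hs @ [H])" "distinct (Hs @ [H])"
    and equicard: "\<forall>A\<in>set (Hs @ [H]). finite A \<and> card A = d"
  obtains K where "K \<subseteq> H" "gen (set Hs) \<inter> Pow H - {{}} = Pow K - {{}}"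
proof (cases "Hs = []")
  case True
  then show ?thesis using that[of "{}"] by (simp add: gen_def)
next
  case False
  have "\<forall>A\<in>insert H (set Hs). finite A \<and> card A = d" using equicard by simp
  then have antichain: "A = B"
    if "A \<in> insert H (set Hs)" "B \<in> insert H (set Hs)" "A \<subseteq> B" for A B
    using that card_subset_eq[of B A] by metis
  have "is_leaf (gen (insert H (set Hs))) H"
    using assms(1) False by (simp add: leaf_order_snoc)
  moreover have "H \<notin> set Hs" using assms(2) by simp
  ultimately obtain G where "gen (set Hs) \<inter> Pow H = Pow (H \<inter> G)"
    using antichain leaf_meets_gen_in_facet by metis
  then show ?thesis by (intro that[of "H \<inter> G"]) auto
qed

lemma peaks_at_half_leaf_order:
  assumes "leaf_order Hs" "distinct Hs" "\<forall>H\<in>set Hs. finite H \<and> card H = d"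
  shows "peaks_at_half d (\<lambda>t. card {S \<in> gen (set Hs). card S = t})"
  using assms
proof (induction Hs rule: rev_induct)
  case Nil
  show ?case by (simp add: peaks_at_half_def gen_def)
next
  case (snoc H Hs)
  then have IH: "peaks_at_half d (\<lambda>t. card {S \<in> gen (set Hs). card S = t})"
    by (simp add: leaf_order_snoc)
  obtain K where K: "K \<subseteq> H" "gen (set Hs) \<inter> Pow H - {{}} = Pow K - {{}}"
    using gen_meets_last_facet[OF snoc.prems] .
  have H: "finite H" "card H = d" using snoc.prems(3) by auto
  then have "card K \<le> d" using card_mono[OF H(1) K(1)] by simp
  then have "peaks_at_half d (\<lambda>t. (d choose t) - (card K choose t))"
    by (rule peaks_at_half_binomial_diff)
  with IH have sum: "peaks_at_half d
      (\<lambda>t. card {S \<in> gen (set Hs). card S = t} + ((d choose t) - (card K choose t)))"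
    by (rule peaks_at_half_add)
  have "card {S \<in> gen (set (Hs @ [H])). card S = t}
      = card {S \<in> gen (set Hs). card S = t} + ((d choose t) - (card K choose t))" if "t \<ge> 1" for t
    using card_faces_gen_insert[OF _ _ H(1) K that] snoc.prems(3) H(2) by simp
  with sum show ?case by (rule peaks_at_half_cong)
qed

lemma finite_complex:
  assumes "simplicial_complex n \<Delta>"
  shows "finite \<Delta>" "\<forall>F\<in>\<Delta>. finite F"
proof -
  have faces: "\<forall>F\<in>\<Delta>. F \<subseteq> {1..n}" using assms unfolding simplicial_complex_def by (rule conjunct1)
  then have "\<Delta> \<subseteq> Pow {1..n}" by auto
  then show "finite \<Delta>" by (rule finite_subset) simp
  from faces show "\<forall>F\<in>\<Delta>. finite F" using finite_subset[OF _ finite_atLeastAtMost] by blast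
qed

lemma face_subset_facet:
  assumes "finite \<Delta>" "F \<in> \<Delta>"
  obtains M where "M \<in> facets \<Delta>" "F \<subseteq> M"
proof -
  obtain M where "M \<in> \<Delta>" "F \<subseteq> M" "\<forall>G\<in>\<Delta>. M \<subseteq> G \<longrightarrow> M = G"
    using finite_has_maximal2[OF assms] by blast
  then have "M \<in> facets \<Delta>" unfolding facets_def by auto
  then show thesis using \<open>F \<subseteq> M\<close> by (rule that)
qed

lemma gen_facets:
  assumes "simplicial_complex n \<Delta>"
  shows "gen (facets \<Delta>) = \<Delta>"
proof
  show "gen (facets \<Delta>) \<subseteq> \<Delta>"
  proof
    fix S assume "S \<in> gen (facets \<Delta>)"
    then obtain F where "F \<in> \<Delta>" "S \<subseteq> F" unfolding gen_def facets_def by blast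
    with assms show "S \<in> \<Delta>" unfolding simplicial_complex_def by blast
  qed
  show "\<Delta> \<subseteq> gen (facets \<Delta>)"
    using face_subset_facet[OF finite_complex(1)[OF assms]] unfolding gen_def by blast
qed

lemma card_facets_pure:
  assumes "simplicial_complex n \<Delta>" "pure \<Delta>"
    and "\<exists>F\<in>\<Delta>. card F = d" "\<forall>F\<in>\<Delta>. card F \<le> d"
  shows "\<forall>M\<in>facets \<Delta>. card M = d"
proof -
  obtain F where F: "F \<in> \<Delta>" "card F = d" using assms(3) by blast
  obtain M where M: "M \<in> facets \<Delta>" "F \<subseteq> M"
    by (rule face_subset_facet[OF finite_complex(1)[OF assms(1)] F(1)])
  then have "M \<in> \<Delta>" unfolding facets_def by simp
  then have "card F \<le> card M" "card M \<le> d"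
    using card_mono[OF _ M(2)] finite_complex(2)[OF assms(1)] assms(4) by auto
  with F(2) have "card M = d" by simp
  with M(1) assms(2) show ?thesis unfolding pure_def by metis
qed

theorem theorem3p2:
  fixes n d :: nat and \<Delta> :: "nat set set"
  assumes "simplicial_complex n \<Delta>"
    and "pure \<Delta>"
    and "quasi_forest \<Delta>"
    and "\<exists>F\<in>\<Delta>. card F = d"
    and "\<forall>F\<in>\<Delta>. card F \<le> d"
  shows "unimodal (fvec \<Delta>) d"
proof -
  obtain Hs where Hs: "leaf_order Hs" "distinct Hs" "set Hs = facets \<Delta>"
    using assms(3) unfolding quasi_forest_def leaf_order_def by blast
  have "\<forall>H\<in>set Hs. finite H \<and> card H = d"
    using Hs(3) card_facets_pure[OF assms(1,2,4,5)] finite_complex(2)[OF assms(1)]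
    unfolding facets_def by auto
  with Hs(1,2) have "peaks_at_half d (\<lambda>t. card {S \<in> gen (set Hs). card S = t})"
    by (rule peaks_at_half_leaf_order)
  then have "peaks_at_half d (\<lambda>t. card {S \<in> \<Delta>. card S = t})"
    by (simp only: Hs(3) gen_facets[OF assms(1)])
  then have "unimodal (\<lambda>i. card {S \<in> \<Delta>. card S = Suc i}) d"
    by (rule unimodal_if_peaks_at_half)
  then show ?thesis unfolding fvec_def by simp
qed

end
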